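(* Fix $q\ge 2$ and a positive integer $d$. There exists a constant $C>0$ such that for all sufficiently large $n$ and all $k$ with $d\le k\le n$, $$a_q(n,k,d)\le q^{\,n-C\frac{(n-2k)k^{d-1}}{q^k}}.$$
   Context: $\Sigma_q=\{0,\dots,q-1\}$, $w_H$ is Hamming weight. A vector $\vec a\in\Sigma_q^n$ is a $(d,k)$-window weight limited (WWL) vector if $n<k$ or $w_H(a_i,\dots,a_{i+k-1})\ge d$ for all $i\in[1,n-k+1]$. $a_q(n,k,d)$ is the number of $(d,k)$-WWL vectors in $\Sigma_q^n$. *)

theory Defs
  imports Complex_Main
begin

definition hamming_weight :: "nat list \<Rightarrow> nat" where
  "hamming_weight xs = length (filter (\<lambda>x. x \<noteq> 0) xs)"

text \<open>(d,k)-window weight limited vector. Windows are indexed from 0: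
  the window starting at position i (0-based) is take k (drop i a),
  for i = 0 .. n-k (i.e. i < n - k + 1).\<close>
definition wwl :: "nat \<Rightarrow> nat \<Rightarrow> nat list \<Rightarrow> bool" where
  "wwl d k a \<longleftrightarrow> length a < k \<or>
     (\<forall>i < length a - k + 1. hamming_weight (take k (drop i a)) \<ge> d)"

definition a_q :: "nat \<Rightarrow> nat \<Rightarrow> nat \<Rightarrow> nat \<Rightarrow> nat" where
  "a_q q n k d = card {a :: nat list. length a = n \<and> set a \<subseteq> {..<q} \<and> wwl d k a}"

end

theory Submission
  imports Defs
begin

text \<open>
  The count is submultiplicative in the length: cutting a vector of length \<open>B + n\<close> into its
  first \<open>B\<close> and last \<open>n\<close> entries shows \<open>a_q(B + n) \<le> a_q(B) a_q(n)\<close>, so with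
  \<open>n = 2km + r\<close> we get \<open>a_q(n) \<le> a_q(2k)^m q^r\<close>. It therefore suffices to exhibit many vectors
  of length \<open>2k\<close> that violate the window condition. For \<open>j < k\<close> and a set \<open>T\<close> of \<open>d - 1\<close>
  positions, take an arbitrary prefix of length \<open>j\<close>, a nonzero entry at position \<open>j\<close>, zeros up
  to position \<open>k - 1\<close>, the indicator vector of \<open>T\<close> on positions \<open>k, \<dots>, k + j\<close> and an arbitrary
  suffix: the window starting at \<open>j + 1\<close> has weight \<open>d - 1\<close>. These vectors are pairwise
  distinct and there are \<open>(k choose d)(q - 1)q^(k-1) \<ge> (k/d)^d q^k / 2\<close> of them, so
  \<open>a_q(2k) \<le> q^(2k)(1 - p)\<close> with \<open>p \<ge> k^d / (2 d^d q^k)\<close>, and \<open>1 - p \<le> exp(-p)\<close> gives the bound.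
\<close>

definition wwl_vectors :: "nat \<Rightarrow> nat \<Rightarrow> nat \<Rightarrow> nat \<Rightarrow> nat list set" where
  "wwl_vectors q n k d = {a. length a = n \<and> set a \<subseteq> {..<q} \<and> wwl d k a}"

lemma a_q_eq_card_wwl_vectors: "a_q q n k d = card (wwl_vectors q n k d)"
  by (simp add: a_q_def wwl_vectors_def)

lemma wwl_vectors_subset_lists: "wwl_vectors q n k d \<subseteq> {a. set a \<subseteq> {..<q} \<and> length a = n}"
  by (auto simp: wwl_vectors_def)

lemma finite_wwl_vectors: "finite (wwl_vectors q n k d)"
  using wwl_vectors_subset_lists finite_lists_length_eq[OF finite_lessThan] by (rule finite_subset)

lemma wwl_iff_windows:
  "wwl d k a \<longleftrightarrow> (\<forall>i. i + k \<le> length a \<longrightarrow> d \<le> hamming_weight (take k (drop i a)))"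
  unfolding wwl_def by (cases "length a < k") (auto simp: less_diff_conv)

lemma wwl_take: "wwl d k a \<Longrightarrow> wwl d k (take B a)"
  unfolding wwl_iff_windows by (auto simp: take_drop min_def)

lemma wwl_drop: "wwl d k a \<Longrightarrow> wwl d k (drop B a)"
proof (unfold wwl_iff_windows, intro allI impI)
  fix i assume windows: "\<forall>i. i + k \<le> length a \<longrightarrow> d \<le> hamming_weight (take k (drop i a))"
    and "i + k \<le> length (drop B a)"
  show "d \<le> hamming_weight (take k (drop i (drop B a)))"
  proof (cases "B \<le> length a")
    case True
    with \<open>i + k \<le> length (drop B a)\<close> have "B + i + k \<le> length a" by simp
    with windows show ?thesis by (simp add: add.commute[of i])
  next
    case False
    with \<open>i + k \<le> length (drop B a)\<close> have "k = 0" by simp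
    with windows show ?thesis by (metis add_0 le0 take0)
  qed
qed

lemma card_wwl_vectors_add_le:
  "card (wwl_vectors q (B + n) k d) \<le> card (wwl_vectors q B k d) * card (wwl_vectors q n k d)"
proof -
  have "card (wwl_vectors q (B + n) k d) \<le> card (wwl_vectors q B k d \<times> wwl_vectors q n k d)"
  proof (rule card_inj_on_le)
    show "inj_on (\<lambda>a. (take B a, drop B a)) (wwl_vectors q (B + n) k d)"
      by (rule inj_onI) (metis append_take_drop_id prod.inject)
    show "(\<lambda>a. (take B a, drop B a)) ` wwl_vectors q (B + n) k d
            \<subseteq> wwl_vectors q B k d \<times> wwl_vectors q n k d"
      by (auto simp: wwl_vectors_def wwl_take wwl_drop dest: in_set_takeD in_set_dropD)
  qed (simp add: finite_wwl_vectors)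
  then show ?thesis by (simp add: card_cartesian_product)
qed

lemma card_wwl_vectors_blocks_le:
  "card (wwl_vectors q (B * m + r) k d) \<le> card (wwl_vectors q B k d) ^ m * q ^ r"
proof (induction m)
  case 0
  have "card (wwl_vectors q r k d) \<le> card {a. set a \<subseteq> {..<q} \<and> length a = r}"
    by (intro card_mono finite_lists_length_eq finite_lessThan wwl_vectors_subset_lists)
  then show ?case by (simp add: card_lists_length_eq)
next
  case (Suc m)
  have "card (wwl_vectors q (B + (B * m + r)) k d)
          \<le> card (wwl_vectors q B k d) * card (wwl_vectors q (B * m + r) k d)"
    by (rule card_wwl_vectors_add_le)
  also have "\<dots> \<le> card (wwl_vectors q B k d) * (card (wwl_vectors q B k d) ^ m * q ^ r)"
    using Suc.IH by (rule mult_left_mono) simp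
  finally show ?case by (simp add: algebra_simps)
qed

lemma hamming_weight_append: "hamming_weight (xs @ ys) = hamming_weight xs + hamming_weight ys"
  by (simp add: hamming_weight_def)

lemma hamming_weight_replicate_0: "hamming_weight (replicate n 0) = 0"
  by (simp add: hamming_weight_def)

definition indicator_list :: "nat set \<Rightarrow> nat \<Rightarrow> nat list" where
  "indicator_list T n = map (\<lambda>i. if i \<in> T then 1 else 0) [0..<n]"

lemma length_indicator_list [simp]: "length (indicator_list T n) = n"
  by (simp add: indicator_list_def)

lemma set_indicator_list_subset: "set (indicator_list T n) \<subseteq> {0, 1}"
  by (auto simp: indicator_list_def)

lemma hamming_weight_indicator_list:
  assumes "T \<subseteq> {..<n}"
  shows "hamming_weight (indicator_list T n) = card T"
proof -
  have "hamming_weight (indicator_list T n) = length (filter (\<lambda>i. i \<in> T) [0..<n])"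
    by (simp add: hamming_weight_def indicator_list_def filter_map comp_def)
  also have "\<dots> = card (set (filter (\<lambda>i. i \<in> T) [0..<n]))"
    by (rule distinct_card[symmetric]) simp
  also have "set (filter (\<lambda>i. i \<in> T) [0..<n]) = T"
    using assms by auto
  finally show ?thesis .
qed

lemma indicator_list_inject:
  assumes "indicator_list T n = indicator_list T' n" "T \<subseteq> {..<n}" "T' \<subseteq> {..<n}"
  shows "T = T'"
proof -
  have "i \<in> T \<longleftrightarrow> i \<in> T'" if "i < n" for i
    using arg_cong[OF assms(1), of "\<lambda>xs. xs ! i"] that by (simp add: indicator_list_def split: if_splits)
  then show ?thesis using assms(2,3) by blast
qed

text \<open>The entry \<open>c\<close> is meant to be nonzero: it is then the last nonzero entry among the first
  \<open>k\<close>, which recovers \<open>j\<close> from the block.\<close>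

definition bad_block :: "nat \<Rightarrow> nat \<Rightarrow> nat set \<Rightarrow> nat list \<Rightarrow> nat \<Rightarrow> nat list \<Rightarrow> nat list" where
  "bad_block k j T u c v = u @ c # replicate (k - Suc j) 0 @ indicator_list T (Suc j) @ v"

lemma not_wwl_bad_block:
  assumes "length u = j" "j < k" "T \<subseteq> {..<Suc j}" "card T < d"
  shows "\<not> wwl d k (bad_block k j T u c v)"
proof
  assume "wwl d k (bad_block k j T u c v)"
  moreover have "Suc j + k \<le> length (bad_block k j T u c v)"
    using assms(1,2) by (simp add: bad_block_def)
  ultimately have "d \<le> hamming_weight (take k (drop (Suc j) (bad_block k j T u c v)))"
    by (simp add: wwl_iff_windows)
  also have "take k (drop (Suc j) (bad_block k j T u c v))
               = replicate (k - Suc j) 0 @ indicator_list T (Suc j)"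
    using assms(1,2) by (simp add: bad_block_def)
  also have "hamming_weight \<dots> = card T"
    using assms(3) by (simp add: hamming_weight_append hamming_weight_replicate_0
        hamming_weight_indicator_list)
  finally show False using assms(4) by simp
qed

lemma length_dropWhile_zero_rev:
  "c \<noteq> 0 \<Longrightarrow> length (dropWhile (\<lambda>x. x = 0) (rev (u @ c # replicate m 0))) = Suc (length u)"
  by (simp add: dropWhile_append)

lemma bad_block_inject:
  assumes eq: "bad_block k j T u c v = bad_block k j' T' u' c' v'"
    and "length u = j" "j < k" "c \<noteq> 0" "T \<subseteq> {..<Suc j}"
    and "length u' = j'" "j' < k" "c' \<noteq> 0" "T' \<subseteq> {..<Suc j'}"
  shows "j = j' \<and> T = T' \<and> u = u' \<and> c = c' \<and> v = v'"
proof -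
  have take_k: "take k (bad_block k i S w b z) = w @ b # replicate (k - Suc i) 0"
    if "length w = i" "i < k" for i S w b z
    using that by (simp add: bad_block_def Suc_diff_Suc[symmetric])
  from eq have "u @ c # replicate (k - Suc j) 0 = u' @ c' # replicate (k - Suc j') 0"
    using take_k assms by metis
  then have "j = j'"
    using arg_cong[of _ _ "\<lambda>xs. length (dropWhile (\<lambda>x. x = 0) (rev xs))"] assms
    by (metis length_dropWhile_zero_rev nat.inject)
  with eq assms have "u = u' \<and> c = c' \<and> indicator_list T (Suc j) = indicator_list T' (Suc j) \<and> v = v'"
    by (simp add: bad_block_def)
  with \<open>j = j'\<close> assms show ?thesis
    using indicator_list_inject by blast
qed

text \<open>Restricting \<open>T\<close> to the first \<open>j\<close> of the \<open>j + 1\<close> indicator positions makes the count exactly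
  \<open>(k choose d)(q - 1)q^(k-1)\<close>, by the hockey-stick identity.\<close>

definition bad_params :: "nat \<Rightarrow> nat \<Rightarrow> nat \<Rightarrow> (nat \<times> nat set \<times> nat list \<times> nat \<times> nat list) set" where
  "bad_params q k d =
     (SIGMA j:{..<k}. {T. T \<subseteq> {..<j} \<and> card T = d - 1} \<times> {u. set u \<subseteq> {..<q} \<and> length u = j}
        \<times> {1..<q} \<times> {v. set v \<subseteq> {..<q} \<and> length v = k - Suc j})"

lemma sum_choose_lessThan: "0 < d \<Longrightarrow> (\<Sum>j<k. j choose (d - 1)) = k choose d"
  by (cases k) (simp_all add: lessThan_Suc_atMost sum_choose_upper)

lemma card_bad_params:
  assumes "0 < d"
  shows "card (bad_params q k d) = (k choose d) * ((q - 1) * q ^ (k - 1))"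
proof -
  have "card (bad_params q k d) = (\<Sum>j<k. (j choose (d - 1)) * (q ^ j * ((q - 1) * q ^ (k - Suc j))))"
    unfolding bad_params_def
    by (subst card_SigmaI) (auto simp: card_cartesian_product card_lists_length_eq n_subsets
        finite_lists_length_eq intro!: sum.cong)
  also have "\<dots> = (\<Sum>j<k. (j choose (d - 1)) * ((q - 1) * q ^ (k - 1)))"
  proof (rule sum.cong)
    fix j assume "j \<in> {..<k}"
    then have "q ^ j * q ^ (k - Suc j) = q ^ (k - 1)"
      by (simp flip: power_add)
    then show "(j choose (d - 1)) * (q ^ j * ((q - 1) * q ^ (k - Suc j)))
                 = (j choose (d - 1)) * ((q - 1) * q ^ (k - 1))"
      by (metis mult.left_commute)
  qed simp
  also have "\<dots> = (k choose d) * ((q - 1) * q ^ (k - 1))"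
    by (simp only: sum_distrib_right[symmetric] sum_choose_lessThan[OF assms])
  finally show ?thesis .
qed

lemma card_wwl_vectors_double_window:
  assumes "2 \<le> q" "0 < d"
  shows "card (wwl_vectors q (2 * k) k d) + (k choose d) * ((q - 1) * q ^ (k - 1)) \<le> q ^ (2 * k)"
proof -
  let ?f = "\<lambda>(j, T, u, c, v). bad_block k j T u c v"
  let ?B = "?f ` bad_params q k d"
  let ?W = "wwl_vectors q (2 * k) k d"
  let ?L = "{a. set a \<subseteq> {..<q} \<and> length a = 2 * k}"
  have params: "j < k \<and> T \<subseteq> {..<Suc j} \<and> card T < d \<and> set u \<subseteq> {..<q} \<and> length u = j
      \<and> c \<noteq> 0 \<and> c < q \<and> set v \<subseteq> {..<q} \<and> length v = k - Suc j"
    if "(j, T, u, c, v) \<in> bad_params q k d" for j T u c v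
    using that assms(2) by (auto simp: bad_params_def)
  have inj: "inj_on ?f (bad_params q k d)"
  proof (rule inj_onI)
    fix p p' assume "p \<in> bad_params q k d" "p' \<in> bad_params q k d" "?f p = ?f p'"
    moreover obtain j T u c v j' T' u' c' v' where "p = (j, T, u, c, v)" "p' = (j', T', u', c', v')"
      by (metis prod_cases5)
    ultimately show "p = p'"
      using bad_block_inject[of k j T u c v j' T' u' c' v'] params[of j T u c v] params[of j' T' u' c' v']
      by simp
  qed
  have "?B \<subseteq> ?L"
  proof clarify
    fix j T u c v assume "(j, T, u, c, v) \<in> bad_params q k d"
    note p = params[OF this]
    have "set (indicator_list T (Suc j)) \<subseteq> {..<q}"
      using set_indicator_list_subset assms(1) by fastforce
    moreover have "set (replicate (k - Suc j) 0) \<subseteq> {..<q}"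
      using assms(1) by auto
    ultimately show "set (bad_block k j T u c v) \<subseteq> {..<q} \<and> length (bad_block k j T u c v) = 2 * k"
      using p by (simp add: bad_block_def)
  qed
  moreover have "?W \<inter> ?B = {}"
  proof (rule equals0I, clarify)
    fix j T u c v assume "bad_block k j T u c v \<in> ?W" "(j, T, u, c, v) \<in> bad_params q k d"
    then show False
      using params not_wwl_bad_block by (simp add: wwl_vectors_def)
  qed
  moreover have "finite ?L"
    by (simp add: finite_lists_length_eq)
  ultimately have "card ?W + card ?B = card (?W \<union> ?B)"
    by (intro card_Un_disjoint[symmetric] finite_wwl_vectors) (auto intro: finite_subset)
  also have "\<dots> \<le> card ?L"
    using \<open>finite ?L\<close> \<open>?B \<subseteq> ?L\<close> wwl_vectors_subset_lists by (intro card_mono) auto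
  finally show ?thesis
    using assms(2) by (simp add: card_image[OF inj] card_bad_params card_lists_length_eq)
qed

lemma power_le_exp_deficit:
  fixes g P Q :: real
  assumes "0 \<le> g" "g + P \<le> Q" "0 < Q"
  shows "g ^ m \<le> Q ^ m * exp (- (real m * P / Q))"
proof -
  have "g \<le> Q * (1 - P / Q)"
    using assms(2,3) by (simp add: right_diff_distrib)
  also have "\<dots> \<le> Q * exp (- (P / Q))"
    using exp_ge_add_one_self[of "- (P / Q)"] assms(3) by (intro mult_left_mono) simp_all
  finally have "g ^ m \<le> (Q * exp (- (P / Q))) ^ m"
    using assms(1) by (rule power_mono)
  also have "\<dots> = Q ^ m * exp (- (real m * P / Q))"
    by (simp add: power_mult_distrib flip: exp_of_nat_mult)
  finally show ?thesis .
qed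

lemma binomial_block_density_ge:
  assumes "2 \<le> q" "d \<le> k" "0 < k"
  shows "real k ^ d / (2 * real d ^ d * real q ^ k)
           \<le> real ((k choose d) * ((q - 1) * q ^ (k - 1))) / real q ^ (2 * k)"
proof -
  have "(real k / real d) ^ d \<le> real (k choose d)"
    using assms(2) by (rule binomial_ge_n_over_k_pow_k)
  moreover have "real q ^ k / 2 \<le> (real q - 1) * real q ^ (k - 1)"
  proof -
    have "real q ^ k = real q * real q ^ (k - 1)"
      using assms(3) by (simp flip: power_Suc)
    then show ?thesis
      using assms(1) by (simp add: mult_right_mono)
  qed
  ultimately have "(real k / real d) ^ d * (real q ^ k / 2)
                    \<le> real (k choose d) * ((real q - 1) * real q ^ (k - 1))"
    by (rule mult_mono) simp_all
  also have "\<dots> = real ((k choose d) * ((q - 1) * q ^ (k - 1)))"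
    using assms(1) by (simp add: of_nat_diff)
  finally have *: "(real k / real d) ^ d * (real q ^ k / 2) \<le> real ((k choose d) * ((q - 1) * q ^ (k - 1)))" .
  have "real k ^ d / (2 * real d ^ d * real q ^ k) = (real k / real d) ^ d * (real q ^ k / 2) / real q ^ (2 * k)"
  proof -
    have "real q ^ (2 * k) = real q ^ k * real q ^ k"
      by (simp only: mult_2 power_add)
    then show ?thesis
      using assms(1) by (simp add: power_divide)
  qed
  also have "\<dots> \<le> real ((k choose d) * ((q - 1) * q ^ (k - 1))) / real q ^ (2 * k)"
    using * by (rule divide_right_mono) simp
  finally show ?thesis .
qed

lemma block_deficit_ge:
  assumes "2 \<le> q" "0 < d" "d \<le> k"
  shows "(real n - 2 * real k) * real k ^ (d - 1) / (4 * real d ^ d * real q ^ k)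
           \<le> real (n div (2 * k)) * (real ((k choose d) * ((q - 1) * q ^ (k - 1))) / real q ^ (2 * k))"
proof -
  define m where "m = real (n div (2 * k))"
  define \<delta> where "\<delta> = real k ^ d / (2 * real d ^ d * real q ^ k)"
  have k: "0 < k" using assms(2,3) by simp
  have "n = 2 * k * (n div (2 * k)) + n mod (2 * k)"
    by simp
  moreover have "n mod (2 * k) < 2 * k"
    using k by simp
  ultimately have "n < 2 * k * (n div (2 * k)) + 2 * k"
    by linarith
  then have "real n < 2 * real k * m + 2 * real k"
    unfolding m_def by (metis of_nat_less_iff of_nat_add of_nat_mult of_nat_numeral)
  then have "(real n - 2 * real k) / (2 * real k) \<le> m"
    using k by (simp add: divide_le_eq algebra_simps)
  have "(real n - 2 * real k) * real k ^ (d - 1) / (4 * real d ^ d * real q ^ k)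
          = (real n - 2 * real k) / (2 * real k) * \<delta>"
  proof -
    have "real k ^ d = real k * real k ^ (d - 1)"
      using assms(2) by (simp flip: power_Suc)
    then show ?thesis
      using k assms(1,2) by (simp add: \<delta>_def field_simps)
  qed
  also have "\<dots> \<le> m * \<delta>"
    using \<open>(real n - 2 * real k) / (2 * real k) \<le> m\<close> by (rule mult_right_mono) (simp add: \<delta>_def)
  also have "\<dots> \<le> m * (real ((k choose d) * ((q - 1) * q ^ (k - 1))) / real q ^ (2 * k))"
    unfolding \<delta>_def m_def using assms k by (intro mult_left_mono binomial_block_density_ge) simp_all
  finally show ?thesis
    unfolding m_def .
qed

lemma a_q_le_powr:
  assumes "2 \<le> q" "0 < d" "d \<le> k"
  shows "real (a_q q n k d)
           \<le> real q powr (real n - (real n - 2 * real k) * real k ^ (d - 1)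
                                        / (4 * real d ^ d * real q ^ k) / ln q)"
proof -
  define m where "m = n div (2 * k)"
  define r where "r = n mod (2 * k)"
  define P where "P = (k choose d) * ((q - 1) * q ^ (k - 1))"
  define E where "E = (real n - 2 * real k) * real k ^ (d - 1) / (4 * real d ^ d * real q ^ k)"
  let ?g = "card (wwl_vectors q (2 * k) k d)"
  have q: "0 < real q" using assms(1) by simp
  have n: "n = 2 * k * m + r"
    by (simp add: m_def r_def)
  have "a_q q n k d \<le> ?g ^ m * q ^ r"
    unfolding a_q_eq_card_wwl_vectors n by (rule card_wwl_vectors_blocks_le)
  then have "real (a_q q n k d) \<le> real ?g ^ m * real q ^ r"
    by (metis of_nat_le_iff of_nat_mult of_nat_power)
  also have "\<dots> \<le> (real q ^ (2 * k)) ^ m * exp (- (real m * real P / real q ^ (2 * k)))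
                      * real q ^ r"
  proof (intro mult_right_mono power_le_exp_deficit)
    have "?g + P \<le> q ^ (2 * k)"
      unfolding P_def by (rule card_wwl_vectors_double_window[OF assms(1,2)])
    then show "real ?g + real P \<le> real q ^ (2 * k)"
      by (metis of_nat_add of_nat_le_iff of_nat_power)
  qed (use q in simp_all)
  also have "\<dots> = real q ^ n * exp (- (real m * (real P / real q ^ (2 * k))))"
    unfolding n by (simp add: power_add power_mult)
  also have "\<dots> \<le> real q ^ n * exp (- E)"
    using block_deficit_ge[OF assms, of n] q by (simp add: E_def m_def P_def)
  also have "\<dots> = real q powr (real n - E / ln q)"
  proof -
    have "real q powr (E / ln q) = exp E"
      using assms(1) by (simp add: powr_def)
    then show ?thesis
      using q by (simp add: powr_diff powr_realpow exp_minus field_simps)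
  qed
  finally show ?thesis
    unfolding E_def .
qed

theorem lemma7:
  fixes q d :: nat
  assumes "q \<ge> 2" and "d > 0"
  shows "\<exists>C > (0::real). \<exists>N. \<forall>n \<ge> N. \<forall>k. d \<le> k \<and> k \<le> n \<longrightarrow>
           real (a_q q n k d)
             \<le> real q powr (real n - C * ((real n - 2 * real k) * real k ^ (d - 1)) / real q ^ k)"
proof -
  define C where "C = 1 / (4 * real d ^ d * ln q)"
  have "0 < C"
    using assms by (simp add: C_def)
  moreover have "real (a_q q n k d)
      \<le> real q powr (real n - C * ((real n - 2 * real k) * real k ^ (d - 1)) / real q ^ k)"
    if "d \<le> k" for n k
    using a_q_le_powr[OF assms that, of n] by (simp add: C_def mult_ac)
  ultimately show ?thesis
    by blast \<comment> \<open>with \<open>N = 0\<close>: the bound holds for every \<open>n\<close>\<close>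
qed

end
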